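(* Let $N\ge 1$ be an integer and $h,g>0$ real numbers. For $k\in\{0,1,\dots,N\}$ and $\Delta>0$ define $$R_k(\Delta):=\log\Big(1+(N-k)\frac{h^2}{1+\Delta}\Big)+\log(1+kg^2)-k\log\Big(\frac{1+\Delta}{\Delta}\Big)$$ (logarithms base $2$). Then for all $i,j\in\{0,\dots,N\}$ with $i\neq j$ there exists exactly one $\Delta=\Delta^*_{ij}>0$ with $R_i(\Delta)=R_j(\Delta)$.
   Context: $R_k(\Delta)$ is the quantize-map-and-forward rate of a cut containing $k$ relays in the symmetric $N$-relay diamond network (all source-relay magnitudes equal $h$, all relay-destination magnitudes equal $g$) when every relay uses Gaussian quantization distortion $\Delta$. *)

theory Defs
  imports Complex_Main
begin

text \<open>QMF rate of a cut containing k relays in the symmetric N-relay diamond network,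
  with Gaussian quantization distortion Delta; logarithms base 2.\<close>
definition qmf_rate :: "nat \<Rightarrow> real \<Rightarrow> real \<Rightarrow> nat \<Rightarrow> real \<Rightarrow> real" where
  "qmf_rate N h g k \<Delta> =
     log 2 (1 + (real N - real k) * (h^2 / (1 + \<Delta>)))
     + log 2 (1 + real k * g^2)
     - real k * log 2 ((1 + \<Delta>) / \<Delta>)"

end

theory Submission
  imports Defs
begin

text \<open>For \<open>i < j\<close> the gap \<open>R\<^sub>i - R\<^sub>j\<close> is strictly decreasing in \<open>\<Delta>\<close>: the quantization penalty
  \<open>(j - i) log((1 + \<Delta>)/\<Delta>)\<close> decreases, and so does \<open>log(1 + (N-i)a) - log(1 + (N-j)a)\<close> with
  \<open>a = h\<^sup>2/(1 + \<Delta>)\<close>. The penalty is unbounded as \<open>\<Delta> \<rightarrow> 0\<close>, so the gap is positive for small \<open>\<Delta>\<close>,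
  while as \<open>\<Delta> \<rightarrow> \<infinity>\<close> it tends to \<open>log(1 + i g\<^sup>2) - log(1 + j g\<^sup>2) < 0\<close>. By continuity it has
  exactly one zero.\<close>

lemma ex1_pos_zero_if_strictly_decreasing:
  fixes f :: "real \<Rightarrow> real"
  assumes cont: "continuous_on {0<..} f"
    and decr: "\<And>x y. 0 < x \<Longrightarrow> x < y \<Longrightarrow> f y < f x"
    and "0 < a" "f a > 0" "0 < b" "f b < 0"
  shows "\<exists>!x. x > 0 \<and> f x = 0"
proof -
  have "a < b"
  proof (rule ccontr)
    assume "\<not> a < b"
    then have "f a \<le> f b" using decr[of b a] \<open>0 < b\<close> by (metis order.order_iff_strict not_less)
    then show False using assms by simp
  qed
  moreover have "continuous_on {a..b} f"
    using \<open>0 < a\<close> by (intro continuous_on_subset[OF cont]) auto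
  ultimately obtain x where x: "a \<le> x" "x \<le> b" "f x = 0"
    using IVT2'[of f b 0 a] assms by auto
  show ?thesis
  proof (rule ex1I[of _ x])
    show "x > 0 \<and> f x = 0" using x \<open>0 < a\<close> by simp
  next
    fix y assume y: "y > 0 \<and> f y = 0"
    show "y = x"
    proof (rule linorder_cases[of x y])
      assume "x < y"
      then show ?thesis using decr[of x y] x y \<open>0 < a\<close> by simp
    next
      assume "y < x"
      then show ?thesis using decr[of y x] x y by simp
    qed simp
  qed
qed

lemma log_one_plus_diff_mono:
  fixes b p q a a' :: real
  assumes "1 < b" "0 \<le> q" "q \<le> p" "0 \<le> a" "a \<le> a'"
  shows "log b (1 + p * a) - log b (1 + q * a) \<le> log b (1 + p * a') - log b (1 + q * a')"
proof -
  have pos: "0 < 1 + p * a" "0 < 1 + q * a" "0 < 1 + p * a'" "0 < 1 + q * a'"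
    using assms by (auto intro!: add_pos_nonneg)
  have "(1 + p * a') * (1 + q * a) - (1 + p * a) * (1 + q * a') = (p - q) * (a' - a)"
    by (simp add: algebra_simps)
  also have "\<dots> \<ge> 0" using assms by simp
  finally have "log b ((1 + p * a) * (1 + q * a')) \<le> log b ((1 + p * a') * (1 + q * a))"
    using pos assms by (subst log_le_cancel_iff) auto
  then show ?thesis using pos assms by (simp add: log_mult)
qed

lemma qmf_rate_continuous_on:
  assumes "k \<le> N"
  shows "continuous_on {0<..} (qmf_rate N h g k)"
proof -
  have pos: "0 < 1 + (real N - real k) * (h\<^sup>2 / (1 + x))" if "0 < x" for x
    using that assms by (intro add_pos_nonneg) auto
  show ?thesis
    unfolding qmf_rate_def
    by (intro continuous_intros) (auto dest: pos simp: add_pos_pos)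
qed

lemma qmf_rate_tendsto_at_top:
  "(qmf_rate N h g k \<longlongrightarrow> log 2 (1 + real k * g\<^sup>2)) at_top"
proof -
  have to_inf: "filterlim (\<lambda>\<Delta>::real. 1 + \<Delta>) at_infinity at_top"
    by (intro filterlim_at_top_imp_at_infinity filterlim_tendsto_add_at_top[OF tendsto_const filterlim_ident])
  have share: "((\<lambda>\<Delta>::real. h\<^sup>2 / (1 + \<Delta>)) \<longlongrightarrow> 0) at_top"
    by (rule tendsto_divide_0[OF tendsto_const to_inf])
  have "((\<lambda>\<Delta>::real. 1 / \<Delta> + 1) \<longlongrightarrow> 0 + 1) at_top"
    by (intro tendsto_intros tendsto_divide_0[OF tendsto_const]
        filterlim_at_top_imp_at_infinity filterlim_ident)
  moreover have "\<forall>\<^sub>F \<Delta> in at_top. 1 / \<Delta> + 1 = (1 + \<Delta>) / (\<Delta>::real)"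
    using eventually_gt_at_top[of 0] by eventually_elim (simp add: field_simps)
  ultimately have penalty: "((\<lambda>\<Delta>::real. (1 + \<Delta>) / \<Delta>) \<longlongrightarrow> 1) at_top"
    using tendsto_cong by fastforce
  have "(qmf_rate N h g k \<longlongrightarrow> log 2 (1 + (real N - real k) * 0) + log 2 (1 + real k * g\<^sup>2)
      - real k * log 2 1) at_top"
    unfolding qmf_rate_def by (intro tendsto_intros share penalty) (auto simp: add_pos_nonneg)
  then show ?thesis by simp
qed

lemma qmf_rate_gap_strictly_decreasing:
  assumes "i < j" "j \<le> N" "0 < \<Delta>\<^sub>1" "\<Delta>\<^sub>1 < \<Delta>\<^sub>2"
  shows "qmf_rate N h g i \<Delta>\<^sub>2 - qmf_rate N h g j \<Delta>\<^sub>2 < qmf_rate N h g i \<Delta>\<^sub>1 - qmf_rate N h g j \<Delta>\<^sub>1"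
proof -
  have share: "log 2 (1 + (real N - real i) * (h\<^sup>2 / (1 + \<Delta>\<^sub>2))) - log 2 (1 + (real N - real j) * (h\<^sup>2 / (1 + \<Delta>\<^sub>2)))
      \<le> log 2 (1 + (real N - real i) * (h\<^sup>2 / (1 + \<Delta>\<^sub>1))) - log 2 (1 + (real N - real j) * (h\<^sup>2 / (1 + \<Delta>\<^sub>1)))"
    using assms by (intro log_one_plus_diff_mono) (auto intro!: divide_left_mono)
  have "log 2 ((1 + \<Delta>\<^sub>2) / \<Delta>\<^sub>2) < log 2 ((1 + \<Delta>\<^sub>1) / \<Delta>\<^sub>1)"
    using assms by (simp add: field_simps)
  then have penalty: "(real j - real i) * log 2 ((1 + \<Delta>\<^sub>2) / \<Delta>\<^sub>2) < (real j - real i) * log 2 ((1 + \<Delta>\<^sub>1) / \<Delta>\<^sub>1)"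
    using assms by simp
  show ?thesis
    using share penalty unfolding qmf_rate_def by (simp add: algebra_simps)
qed

lemma qmf_rate_gap_lower_bound:
  assumes "i \<le> j" "j \<le> N" "0 < \<Delta>"
  shows "(real j - real i) * log 2 ((1 + \<Delta>) / \<Delta>) - (log 2 (1 + real j * g\<^sup>2) - log 2 (1 + real i * g\<^sup>2))
    \<le> qmf_rate N h g i \<Delta> - qmf_rate N h g j \<Delta>"
proof -
  have "0 \<le> log 2 (1 + (real N - real i) * (h\<^sup>2 / (1 + \<Delta>))) - log 2 (1 + (real N - real j) * (h\<^sup>2 / (1 + \<Delta>)))"
    using log_one_plus_diff_mono[of 2 "real N - real j" "real N - real i" 0 "h\<^sup>2 / (1 + \<Delta>)"] assms
    by simp
  then show ?thesis unfolding qmf_rate_def by (simp add: algebra_simps)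
qed

lemma qmf_rate_gap_ex1_zero:
  assumes "g > 0" "i < j" "j \<le> N"
  shows "\<exists>!\<Delta>::real. \<Delta> > 0 \<and> qmf_rate N h g i \<Delta> = qmf_rate N h g j \<Delta>"
proof -
  define F where "F \<Delta> = qmf_rate N h g i \<Delta> - qmf_rate N h g j \<Delta>" for \<Delta>
  define C where "C = log 2 (1 + real j * g\<^sup>2) - log 2 (1 + real i * g\<^sup>2)"
  have "C > 0" unfolding C_def using assms by (simp add: add_pos_nonneg)
  define \<Delta>\<^sub>0 :: real where "\<Delta>\<^sub>0 = 2 powr (- C)"
  define L where "L = log 2 ((1 + \<Delta>\<^sub>0) / \<Delta>\<^sub>0)"
  have "\<Delta>\<^sub>0 > 0" unfolding \<Delta>\<^sub>0_def by simp
  have "C = log 2 (1 / \<Delta>\<^sub>0)"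
    unfolding \<Delta>\<^sub>0_def by (simp add: log_divide log_powr_cancel)
  also have "\<dots> < L"
    unfolding L_def using \<open>\<Delta>\<^sub>0 > 0\<close> by (simp add: divide_strict_right_mono)
  finally have "C < L" .
  have "L \<le> (real j - real i) * L"
    using mult_right_mono[of 1 "real j - real i" L] \<open>C < L\<close> \<open>C > 0\<close> assms by simp
  moreover have "(real j - real i) * L - C \<le> F \<Delta>\<^sub>0"
    using qmf_rate_gap_lower_bound[of i j N \<Delta>\<^sub>0 g h] assms \<open>\<Delta>\<^sub>0 > 0\<close>
    unfolding F_def C_def L_def by simp
  ultimately have "F \<Delta>\<^sub>0 > 0"
    using \<open>C < L\<close> by linarith
  have "(F \<longlongrightarrow> - C) at_top"
    using tendsto_diff[OF qmf_rate_tendsto_at_top qmf_rate_tendsto_at_top]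
    unfolding F_def C_def by simp
  then have "\<forall>\<^sub>F \<Delta> in at_top. F \<Delta> < 0"
    using \<open>C > 0\<close> by (intro order_tendstoD(2)) auto
  then have "\<forall>\<^sub>F \<Delta> in at_top. F \<Delta> < 0 \<and> \<Delta> > 0"
    by (intro eventually_conj eventually_gt_at_top)
  then obtain \<Delta>\<^sub>1 where "F \<Delta>\<^sub>1 < 0" "\<Delta>\<^sub>1 > 0"
    using eventually_happens by fastforce
  have "\<exists>!\<Delta>. \<Delta> > 0 \<and> F \<Delta> = 0"
  proof (rule ex1_pos_zero_if_strictly_decreasing)
    show "continuous_on {0<..} F"
      unfolding F_def using assms
      by (intro continuous_on_diff qmf_rate_continuous_on) simp_all
    show "F y < F x" if "0 < x" "x < y" for x y
      unfolding F_def using qmf_rate_gap_strictly_decreasing[of i j N x y h g] assms that by simp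
  qed fact+
  then show ?thesis unfolding F_def by simp
qed

theorem lemma2:
  fixes N i j :: nat and h g :: real
  assumes "N \<ge> 1" and "h > 0" and "g > 0"
    and "i \<le> N" and "j \<le> N" and "i \<noteq> j"
  shows "\<exists>!\<Delta>::real. \<Delta> > 0 \<and> qmf_rate N h g i \<Delta> = qmf_rate N h g j \<Delta>"
proof (cases "i < j")
  case True
  then show ?thesis using qmf_rate_gap_ex1_zero[OF \<open>g > 0\<close> True \<open>j \<le> N\<close>] by simp
next
  case False
  then have "j < i" using \<open>i \<noteq> j\<close> by simp
  from qmf_rate_gap_ex1_zero[OF \<open>g > 0\<close> this \<open>i \<le> N\<close>] show ?thesis
    by (simp add: eq_commute)
qed

end
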